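(* Let $P$ and $P^\star$ be quantifier-free formulas, with $P$ represented as a syntax tree, and let $\mathcal S$ be a set of pairwise disjoint subtrees of $P$ (repair sites). Let $[P_\bot,P_\top]=\mathrm{CreateBounds}(P,\mathcal S)$, and suppose $P_\bot\Rightarrow P^\star$ and $P^\star\Rightarrow P_\top$. Then there exists a function $\mathcal F$ assigning to each $s\in\mathcal S$ a quantifier-free formula $\mathcal F(s)$ such that the formula obtained from $P$ by replacing each $s\in\mathcal S$ with $\mathcal F(s)$ is logically equivalent to $P^\star$.
   Context: **Formulas.** Predicates are quantifier-free formulas over a common set of typed variables. The atomic predicates are interpreted in a fixed theory. $\varphi\Rightarrow\psi$ means that $\psi$ holds under every assignment of the variables satisfying $\varphi$. Logical equivalence means mutual implication. Replacement formulas $\mathcal F(s)$ may be any quantifier-free formulas built with $\wedge,\vee,\neg$ from atomic predicates over these variables. **Syntax trees.** A predicate is represented as a syntax tree: - leaves are atomic predicates; - each internal node is labeled $\wedge$ or $\vee$ (with at least two children), or $\neg$ (with exactly one child). Subtrees are disjoint if none is contained in another. For a node $x$, $\mathcal S[x]$ denotes the elements of $\mathcal S$ in the subtree rooted at $x$. **CreateBounds.** $\mathrm{CreateBounds}(x,\mathcal S)$ is defined recursively: 1. If $x\in\mathcal S$, it is $[\mathrm{false},\mathrm{true}]$. 2. Otherwise, if $x$ is atomic, it is $[x,x]$. 3. Otherwise, if $x$ is labeled $\Theta\in\{\wedge,\vee\}$ with children $c_i$, it is $[\Theta_i l_{c_i},\Theta_i u_{c_i}]$, where $[l_{c_i},u_{c_i}]=\mathrm{CreateBounds}(c_i,\mathcal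 S[c_i])$. 4. Otherwise, $x$ is $\neg c$, and it is $[\neg u_c,\neg l_c]$, where $[l_c,u_c]=\mathrm{CreateBounds}(c,\mathcal S[c])$. *)

theory Defs
  imports Main
begin

datatype 'a form = Atom 'a | TT | FF | Conj "'a form list" | Disj "'a form list" | Neg "'a form"

fun eval :: "('a \<Rightarrow> 'v \<Rightarrow> bool) \<Rightarrow> 'v \<Rightarrow> 'a form \<Rightarrow> bool" where
  "eval I v (Atom a) = I a v"
| "eval I v TT = True"
| "eval I v FF = False"
| "eval I v (Conj cs) = (\<forall>c\<in>set cs. eval I v c)"
| "eval I v (Disj cs) = (\<exists>c\<in>set cs. eval I v c)"
| "eval I v (Neg c) = (\<not> eval I v c)"

definition fimplies :: "('a \<Rightarrow> 'v \<Rightarrow> bool) \<Rightarrow> 'a form \<Rightarrow> 'a form \<Rightarrow> bool" where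
  "fimplies I \<phi> \<psi> \<longleftrightarrow> (\<forall>v. eval I v \<phi> \<longrightarrow> eval I v \<psi>)"

definition fequiv :: "('a \<Rightarrow> 'v \<Rightarrow> bool) \<Rightarrow> 'a form \<Rightarrow> 'a form \<Rightarrow> bool" where
  "fequiv I \<phi> \<psi> \<longleftrightarrow> fimplies I \<phi> \<psi> \<and> fimplies I \<psi> \<phi>"

fun syntax_tree :: "'a form \<Rightarrow> bool" where
  "syntax_tree (Atom a) = True"
| "syntax_tree TT = False"
| "syntax_tree FF = False"
| "syntax_tree (Conj cs) = (2 \<le> length cs \<and> (\<forall>c\<in>set cs. syntax_tree c))"
| "syntax_tree (Disj cs) = (2 \<le> length cs \<and> (\<forall>c\<in>set cs. syntax_tree c))"
| "syntax_tree (Neg c) = syntax_tree c"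

text \<open>Subtrees (nodes) are identified by their positions: paths of child indices from the root.\<close>
type_synonym pos = "nat list"

fun subtree_at :: "'a form \<Rightarrow> pos \<Rightarrow> 'a form option" where
  "subtree_at x [] = Some x"
| "subtree_at (Conj cs) (i # p) = (if i < length cs then subtree_at (cs ! i) p else None)"
| "subtree_at (Disj cs) (i # p) = (if i < length cs then subtree_at (cs ! i) p else None)"
| "subtree_at (Neg c) (i # p) = (if i = 0 then subtree_at c p else None)"
| "subtree_at _ (_ # _) = None"

definition is_pos :: "'a form \<Rightarrow> pos \<Rightarrow> bool" where
  "is_pos x p \<longleftrightarrow> subtree_at x p \<noteq> None"

definition disjoint_sites :: "pos set \<Rightarrow> bool" where
  "disjoint_sites S \<longleftrightarrow> (\<forall>p\<in>S. \<forall>q\<in>S. p \<noteq> q \<longrightarrow> \<not> (\<exists>r. q = p @ r))"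

definition sub_sites :: "nat \<Rightarrow> pos set \<Rightarrow> pos set" where
  "sub_sites i S = {p. i # p \<in> S}"

fun create_bounds :: "'a form \<Rightarrow> pos set \<Rightarrow> 'a form \<times> 'a form"
and create_bounds_list :: "nat \<Rightarrow> 'a form list \<Rightarrow> pos set \<Rightarrow> ('a form \<times> 'a form) list" where
  "create_bounds x S =
    (if [] \<in> S then (FF, TT) else
      (case x of
        Atom a \<Rightarrow> (Atom a, Atom a)
      | TT \<Rightarrow> (TT, TT)
      | FF \<Rightarrow> (FF, FF)
      | Conj cs \<Rightarrow> (let bs = create_bounds_list 0 cs S in (Conj (map fst bs), Conj (map snd bs)))
      | Disj cs \<Rightarrow> (let bs = create_bounds_list 0 cs S in (Disj (map fst bs), Disj (map snd bs)))
      | Neg c \<Rightarrow> (let b = create_bounds c (sub_sites 0 S) in (Neg (snd b), Neg (fst b)))))"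
| "create_bounds_list i [] S = []"
| "create_bounds_list i (c # cs) S = create_bounds c (sub_sites i S) # create_bounds_list (Suc i) cs S"

fun replace :: "'a form \<Rightarrow> pos set \<Rightarrow> (pos \<Rightarrow> 'a form) \<Rightarrow> 'a form"
and replace_list :: "nat \<Rightarrow> 'a form list \<Rightarrow> pos set \<Rightarrow> (pos \<Rightarrow> 'a form) \<Rightarrow> 'a form list" where
  "replace x S F =
    (if [] \<in> S then F [] else
      (case x of
        Conj cs \<Rightarrow> Conj (replace_list 0 cs S F)
      | Disj cs \<Rightarrow> Disj (replace_list 0 cs S F)
      | Neg c \<Rightarrow> Neg (replace c (sub_sites 0 S) (\<lambda>p. F (0 # p)))
      | _ \<Rightarrow> x))"
| "replace_list i [] S F = []"
| "replace_list i (c # cs) S F = replace c (sub_sites i S) (\<lambda>p. F (i # p)) # replace_list (Suc i) cs S F"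

end

theory Submission
  imports Defs
begin

text \<open>Replace every site by \<open>P\<^sup>\<star>\<close> if it occurs under an even number of negations and by
  \<open>\<not> P\<^sup>\<star>\<close> otherwise. By induction on the tree, the resulting formula then agrees with the
  upper bound \<open>P\<^sub>\<top>\<close> wherever \<open>P\<^sup>\<star>\<close> holds and with the lower bound \<open>P\<^sub>\<bottom>\<close> wherever it fails;
  together with \<open>P\<^sub>\<bottom> \<Rightarrow> P\<^sup>\<star> \<Rightarrow> P\<^sub>\<top>\<close> this is exactly \<open>P\<^sup>\<star>\<close>.\<close>

definition select_bound :: "('a \<Rightarrow> 'v \<Rightarrow> bool) \<Rightarrow> 'v \<Rightarrow> 'a form \<Rightarrow> 'a form \<times> 'a form \<Rightarrow> bool" where
  "select_bound I v Q b = (if eval I v Q then eval I v (snd b) else eval I v (fst b))"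

lemma select_bound_sandwich:
  assumes "fimplies I (fst b) Q" and "fimplies I Q (snd b)"
  shows "select_bound I v Q b = eval I v Q"
  using assms by (auto simp: select_bound_def fimplies_def)

declare create_bounds.simps(1)[simp del] replace.simps(1)[simp del]

lemma create_bounds_site: "[] \<in> S \<Longrightarrow> create_bounds x S = (FF, TT)"
  by (subst create_bounds.simps(1)) simp

lemma replace_site: "[] \<in> S \<Longrightarrow> replace x S F = F []"
  by (subst replace.simps(1)) simp

lemma create_bounds_nonsite:
  assumes "[] \<notin> S"
  shows "create_bounds (Atom a) S = (Atom a, Atom a)"
    and "create_bounds TT S = (TT, TT)"
    and "create_bounds FF S = (FF, FF)"
    and "create_bounds (Conj cs) S =
      (let bs = create_bounds_list 0 cs S in (Conj (map fst bs), Conj (map snd bs)))"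
    and "create_bounds (Disj cs) S =
      (let bs = create_bounds_list 0 cs S in (Disj (map fst bs), Disj (map snd bs)))"
    and "create_bounds (Neg c) S =
      (let b = create_bounds c (sub_sites 0 S) in (Neg (snd b), Neg (fst b)))"
  using assms by (subst create_bounds.simps(1); simp)+

lemma replace_nonsite:
  assumes "[] \<notin> S"
  shows "replace (Atom a) S F = Atom a"
    and "replace TT S F = TT"
    and "replace FF S F = FF"
    and "replace (Conj cs) S F = Conj (replace_list 0 cs S F)"
    and "replace (Disj cs) S F = Disj (replace_list 0 cs S F)"
    and "replace (Neg c) S F = Neg (replace c (sub_sites 0 S) (\<lambda>p. F (0 # p)))"
  using assms by (subst replace.simps(1); simp)+

lemma replace_list_cong:
  assumes "\<And>j p. i \<le> j \<Longrightarrow> F (j # p) = G (j # p)"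
  shows "replace_list i cs S F = replace_list i cs S G"
  using assms
proof (induction cs arbitrary: i)
  case Nil
  then show ?case by simp
next
  case (Cons c cs)
  have "(\<lambda>p. F (i # p)) = (\<lambda>p. G (i # p))"
    using Cons.prems by auto
  moreover have "replace_list (Suc i) cs S F = replace_list (Suc i) cs S G"
    using Cons.prems by (intro Cons.IH) auto
  ultimately show ?case by simp
qed

lemma replace_list_select_bound:
  assumes "\<forall>c\<in>set cs. \<forall>S. \<exists>F. \<forall>v. eval I v (replace c S F) = select_bound I v Q (create_bounds c S)"
  shows "\<exists>F. \<forall>v. map (eval I v) (replace_list i cs S F) =
                   map (select_bound I v Q) (create_bounds_list i cs S)"
  using assms
proof (induction cs arbitrary: i)
  case Nil
  then show ?case by simp
next
  case (Cons c cs)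
  obtain Fc where Fc: "\<forall>v. eval I v (replace c (sub_sites i S) Fc) =
                         select_bound I v Q (create_bounds c (sub_sites i S))"
    using Cons.prems by (meson list.set_intros(1))
  obtain Fs where Fs: "\<forall>v. map (eval I v) (replace_list (Suc i) cs S Fs) =
                         map (select_bound I v Q) (create_bounds_list (Suc i) cs S)"
    using Cons.IH Cons.prems by (meson list.set_intros(2))
  define F where "F p = (if p \<noteq> [] \<and> hd p = i then Fc (tl p) else Fs p)" for p
  have head: "(\<lambda>p. F (i # p)) = Fc"
    by (auto simp: F_def)
  have tail: "replace_list (Suc i) cs S F = replace_list (Suc i) cs S Fs"
    by (rule replace_list_cong) (auto simp: F_def)
  show ?case
    by (intro exI[of _ F]) (simp add: head tail Fc Fs)
qed

lemma select_bound_Conj: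
  "select_bound I v Q (Conj (map fst bs), Conj (map snd bs)) = (\<forall>b\<in>set bs. select_bound I v Q b)"
  by (simp add: select_bound_def)

lemma select_bound_Disj:
  "select_bound I v Q (Disj (map fst bs), Disj (map snd bs)) = (\<exists>b\<in>set bs. select_bound I v Q b)"
  by (simp add: select_bound_def)

lemma select_bound_Neg:
  "select_bound I v Q (Neg (snd b), Neg (fst b)) = (\<not> select_bound I v (Neg Q) b)"
  by (simp add: select_bound_def)

lemma replace_select_bound_site:
  assumes "[] \<in> S"
  shows "\<exists>F. \<forall>v. eval I v (replace x S F) = select_bound I v Q (create_bounds x S)"
  using assms by (intro exI[of _ "\<lambda>_. Q"]) (simp add: create_bounds_site replace_site select_bound_def)

lemma replace_select_bound:
  "\<exists>F. \<forall>v. eval I v (replace x S F) = select_bound I v Q (create_bounds x S)"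
proof (induction x arbitrary: S Q)
  case (Atom a)
  show ?case
    by (cases "[] \<in> S")
      (simp add: replace_select_bound_site, simp add: create_bounds_nonsite replace_nonsite select_bound_def)
next
  case TT
  show ?case
    by (cases "[] \<in> S")
      (simp add: replace_select_bound_site, simp add: create_bounds_nonsite replace_nonsite select_bound_def)
next
  case FF
  show ?case
    by (cases "[] \<in> S")
      (simp add: replace_select_bound_site, simp add: create_bounds_nonsite replace_nonsite select_bound_def)
next
  case (Conj cs)
  show ?case
  proof (cases "[] \<in> S")
    case False
    obtain F where F: "\<forall>v. map (eval I v) (replace_list 0 cs S F) =
                           map (select_bound I v Q) (create_bounds_list 0 cs S)"
      using replace_list_select_bound[of cs I Q] Conj.IH by blast
    have "eval I v (replace (Conj cs) S F) = select_bound I v Q (create_bounds (Conj cs) S)" for v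
    proof -
      have "eval I v (replace (Conj cs) S F) = (\<forall>b\<in>set (map (eval I v) (replace_list 0 cs S F)). b)"
        using False by (simp add: replace_nonsite)
      also have "\<dots> = (\<forall>b\<in>set (map (select_bound I v Q) (create_bounds_list 0 cs S)). b)"
        using F by simp
      also have "\<dots> = select_bound I v Q (create_bounds (Conj cs) S)"
        using False by (simp add: create_bounds_nonsite select_bound_Conj Let_def)
      finally show ?thesis .
    qed
    then show ?thesis by blast
  qed (rule replace_select_bound_site)
next
  case (Disj cs)
  show ?case
  proof (cases "[] \<in> S")
    case False
    obtain F where F: "\<forall>v. map (eval I v) (replace_list 0 cs S F) =
                           map (select_bound I v Q) (create_bounds_list 0 cs S)"
      using replace_list_select_bound[of cs I Q] Disj.IH by blast
    have "eval I v (replace (Disj cs) S F) = select_bound I v Q (create_bounds (Disj cs) S)" for v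
    proof -
      have "eval I v (replace (Disj cs) S F) = (\<exists>b\<in>set (map (eval I v) (replace_list 0 cs S F)). b)"
        using False by (simp add: replace_nonsite)
      also have "\<dots> = (\<exists>b\<in>set (map (select_bound I v Q) (create_bounds_list 0 cs S)). b)"
        using F by simp
      also have "\<dots> = select_bound I v Q (create_bounds (Disj cs) S)"
        using False by (simp add: create_bounds_nonsite select_bound_Disj Let_def)
      finally show ?thesis .
    qed
    then show ?thesis by blast
  qed (rule replace_select_bound_site)
next
  case (Neg c)
  show ?case
  proof (cases "[] \<in> S")
    case False
    \<comment> \<open>Negation swaps the bounds, so the child is made to select by \<open>\<not> Q\<close>.\<close>
    obtain Fc where Fc: "\<forall>v. eval I v (replace c (sub_sites 0 S) Fc) =
                           select_bound I v (Neg Q) (create_bounds c (sub_sites 0 S))"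
      using Neg.IH by blast
    define F where "F p = Fc (tl p)" for p
    have "eval I v (replace (Neg c) S F) = select_bound I v Q (create_bounds (Neg c) S)" for v
    proof -
      have "eval I v (replace (Neg c) S F) = (\<not> eval I v (replace c (sub_sites 0 S) Fc))"
        using False by (simp add: replace_nonsite F_def)
      also have "\<dots> = (\<not> select_bound I v (Neg Q) (create_bounds c (sub_sites 0 S)))"
        using Fc by simp
      also have "\<dots> = select_bound I v Q (create_bounds (Neg c) S)"
        using False by (simp add: create_bounds_nonsite select_bound_Neg Let_def)
      finally show ?thesis .
    qed
    then show ?thesis by blast
  qed (rule replace_select_bound_site)
qed

theorem mainTheorem3:
  fixes I :: "'a \<Rightarrow> 'v \<Rightarrow> bool" and P Pstar :: "'a form" and S :: "pos set"
  assumes "syntax_tree P"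
    and "\<forall>s\<in>S. is_pos P s"
    and "disjoint_sites S"
    and "fimplies I (fst (create_bounds P S)) Pstar"
    and "fimplies I Pstar (snd (create_bounds P S))"
  shows "\<exists>F :: pos \<Rightarrow> 'a form. fequiv I (replace P S F) Pstar"
proof -
  obtain F where "\<forall>v. eval I v (replace P S F) = select_bound I v Pstar (create_bounds P S)"
    using replace_select_bound[where I = I and x = P and S = S and Q = Pstar] by blast
  then have "\<forall>v. eval I v (replace P S F) = eval I v Pstar"
    using select_bound_sandwich[OF assms(4,5)] by simp
  then have "fequiv I (replace P S F) Pstar"
    by (simp add: fequiv_def fimplies_def)
  then show ?thesis by blast
qed

end
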